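(* Let $\underline{X}$ be an observation from a distribution $P_{(\theta,\underline{\eta})}$ indexed by $(\theta,\underline{\eta})$ in a parameter space $H$, with real parameter of interest $\theta$ ranging over $[A,B]$ (possibly $A=-\infty$ or $B=+\infty$), and fix $\alpha\in[0,1]$. For an upper one-sided confidence interval $C(\underline{X})=[A,U(\underline{X})]$, define its modification $C^M$ by $$h(\underline{x},\theta_0)=\sup_{(\theta,\underline{\eta})\in H,\ \theta\ge\theta_0}P_{(\theta,\underline{\eta})}\big(U(\underline{X})\le U(\underline{x})\big),\qquad C^M(\underline{x})=\overline{\{\theta_0: h(\underline{x},\theta_0)>\alpha\}}$$ (this is the h-function of the test statistic $U(\underline{x})-\theta_0$ for $H_0:\theta\ge\theta_0$). Let $C_u(\underline{X})=[A,U_u(\underline{X})]$ be an upper one-sided confidence interval of any level, let $C_u^{M1}=C_u^M$, $C_u^{M(k+1)}=(C_u^{Mk})^M$, and $C_u^{M\infty}=\bigcap_{k\ge1}C_u^{Mk}$. Then: (i) $C_u^M(\underline{X})$ is of level $1-\alpha$, i.e. $\inf_{(\theta,\underline{\eta})\in H}P_{(\theta,\underline{\eta})}(\theta\in C_u^M(\underline{X}))\ge1-\alpha$; (ii) $C_u^{M\infty}(\underline{X})=C_u^M(\underline{X})$; (iii) writing $C_u^M(\underline{X})=[A,U_u^M(\underline{X})]$, $C_u^M$ is the smallest interval in the class $\mathcal{C}_u$ of all $1-\alpha$ exact upper one-sided intervals $C(\underline{X})=[A,U(\underline{X})]$ such that $U(\underline{x}')\le U(\underline{x})$ whenever $U_u(\underline{x}')\le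 U_u(\underline{x})$, for all $\underline{x}',\underline{x}$; i.e. for any $C=[A,U]\in\mathcal{C}_u$, $U_u^M(\underline{X})\le U(\underline{X})$.
   Context: For a set $A'$ of parameter values, $\overline{A'}$ denotes the smallest closed simply connected set (closed interval) containing $A'$. An interval $C(\underline{X})$ for $\theta$ is "$1-\alpha$ exact" if $\inf_{(\theta,\underline{\eta})\in H}P_{(\theta,\underline{\eta})}(\theta\in C(\underline{X}))\ge1-\alpha$. *)

theory Defs
  imports "HOL-Probability.Probability"
begin

text \<open>An upper one-sided interval [A, U(x)] is represented by its upper endpoint
  function U :: 'x \<Rightarrow> ereal; A, B :: ereal (possibly infinite).\<close>

definition up_interval :: "ereal \<Rightarrow> ereal \<Rightarrow> real set" where
  "up_interval A u = {t. A \<le> ereal t \<and> ereal t \<le> u}"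

definition interval_hull :: "real set \<Rightarrow> real set" where
  "interval_hull S = closure (convex hull S)"

definition upper_end :: "real set \<Rightarrow> ereal" where
  "upper_end S = Sup (ereal ` S)"

definition hfun :: "(real \<times> 'e \<Rightarrow> 'x measure) \<Rightarrow> (real \<times> 'e) set \<Rightarrow> ('x \<Rightarrow> ereal)
    \<Rightarrow> 'x \<Rightarrow> real \<Rightarrow> ereal" where
  "hfun P H U x t0 =
     (SUP p \<in> {p \<in> H. t0 \<le> fst p}. ereal (measure (P p) {y \<in> space (P p). U y \<le> U x}))"

definition modif :: "(real \<times> 'e \<Rightarrow> 'x measure) \<Rightarrow> (real \<times> 'e) set \<Rightarrow> ereal \<Rightarrow> ereal \<Rightarrow> real
    \<Rightarrow> ('x \<Rightarrow> ereal) \<Rightarrow> 'x \<Rightarrow> real set" where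
  "modif P H A B \<alpha> U x =
     interval_hull {t0. A \<le> ereal t0 \<and> ereal t0 \<le> B \<and> hfun P H U x t0 > ereal \<alpha>}"

definition modU :: "(real \<times> 'e \<Rightarrow> 'x measure) \<Rightarrow> (real \<times> 'e) set \<Rightarrow> ereal \<Rightarrow> ereal \<Rightarrow> real
    \<Rightarrow> ('x \<Rightarrow> ereal) \<Rightarrow> 'x \<Rightarrow> ereal" where
  "modU P H A B \<alpha> U = (\<lambda>x. upper_end (modif P H A B \<alpha> U x))"

text \<open>C^{M infinity}(x) = intersection over k \<ge> 1 of C^{Mk}(x), where
  C^{M(k+1)} is the modification of the interval with endpoint (modU ^^ k) U.\<close>
definition modif_inf :: "(real \<times> 'e \<Rightarrow> 'x measure) \<Rightarrow> (real \<times> 'e) set \<Rightarrow> ereal \<Rightarrow> ereal \<Rightarrow> real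
    \<Rightarrow> ('x \<Rightarrow> ereal) \<Rightarrow> 'x \<Rightarrow> real set" where
  "modif_inf P H A B \<alpha> U x = (\<Inter>k. modif P H A B \<alpha> ((modU P H A B \<alpha> ^^ k) U) x)"

definition exact_ci :: "(real \<times> 'e \<Rightarrow> 'x measure) \<Rightarrow> (real \<times> 'e) set \<Rightarrow> real
    \<Rightarrow> ('x \<Rightarrow> real set) \<Rightarrow> bool" where
  "exact_ci P H \<alpha> C \<longleftrightarrow>
     (INF p \<in> H. ereal (measure (P p) {y \<in> space (P p). fst p \<in> C y})) \<ge> ereal (1 - \<alpha>)"

definition class_Cu :: "(real \<times> 'e \<Rightarrow> 'x measure) \<Rightarrow> (real \<times> 'e) set \<Rightarrow> 'x measure
    \<Rightarrow> ereal \<Rightarrow> real \<Rightarrow> ('x \<Rightarrow> ereal) \<Rightarrow> ('x \<Rightarrow> ereal) \<Rightarrow> bool" where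
  "class_Cu P H S A \<alpha> Uu U \<longleftrightarrow>
     exact_ci P H \<alpha> (\<lambda>y. up_interval A (U y)) \<and>
     (\<forall>x \<in> space S. \<forall>x' \<in> space S. Uu x' \<le> Uu x \<longrightarrow> U x' \<le> U x)"

end

theory Submission
  imports Defs
begin

text \<open>
  For fixed \<open>(\<theta>, \<eta>)\<close>, the samples \<open>y\<close> whose modified interval misses \<open>\<theta>\<close> form a down-set of
  \<open>U\<^sub>u\<close>, and each of them has \<open>P(U\<^sub>u(X) \<le> U\<^sub>u(y)) \<le> h(y, \<theta>) \<le> \<alpha>\<close>; as in the probability integral
  transform, such a down-set has probability at most \<open>\<alpha>\<close>, which gives (i).
  An interval \<open>[A, U]\<close> whose endpoint is monotone in \<open>U\<^sub>u\<close> has lower sets \<open>{U \<le> U(x)}\<close> containing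
  \<open>{U\<^sub>u \<le> U\<^sub>u(x)}\<close>, so its h-function, and hence its modification, dominates that of \<open>U\<^sub>u\<close>.
  The iterated endpoints stay monotone in \<open>U\<^sub>u\<close>, so every \<open>C\<^sub>u\<^sup>M\<^sup>k\<close> contains \<open>C\<^sub>u\<^sup>M\<close>, which
  gives (ii). For (iii), if \<open>h(x, t) > \<alpha>\<close> is witnessed by \<open>(\<theta>, \<eta>)\<close> with \<open>\<theta> \<ge> t > U(x)\<close>, then
  \<open>[A, U(X)]\<close> can only cover \<open>\<theta>\<close> when \<open>U\<^sub>u(X) > U\<^sub>u(x)\<close>, an event of probability below \<open>1 - \<alpha>\<close>.
\<close>

definition down_closed :: "('x \<Rightarrow> 'b::ord) \<Rightarrow> 'x set \<Rightarrow> 'x set \<Rightarrow> bool" where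
  "down_closed U X D \<longleftrightarrow> (\<forall>y \<in> D. \<forall>z \<in> X. U z \<le> U y \<longrightarrow> z \<in> D)"

lemma down_closed_eq_UN_lower_sets:
  fixes U :: "'x \<Rightarrow> ereal"
  assumes D: "D \<subseteq> space M" "D \<noteq> {}"
    and down: "down_closed U (space M) D"
  obtains y :: "nat \<Rightarrow> 'x" where "range y \<subseteq> D" "incseq (\<lambda>i. U (y i))"
    "D = (\<Union>i. {z \<in> space M. U z \<le> U (y i)})"
proof (cases "\<exists>y\<^sub>0\<in>D. U y\<^sub>0 = Sup (U ` D)")
  case True
  then obtain y\<^sub>0 where y\<^sub>0: "y\<^sub>0 \<in> D" "U y\<^sub>0 = Sup (U ` D)" by blast
  have "D = {z \<in> space M. U z \<le> U y\<^sub>0}"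
    using D(1) down y\<^sub>0 unfolding down_closed_def by (auto intro: SUP_upper)
  then show ?thesis using y\<^sub>0(1) by (intro that[of "\<lambda>_. y\<^sub>0"]) auto
next
  case False
  obtain f where f: "incseq f" "range f \<subseteq> U ` D" "Sup (U ` D) = (SUP i. f i)"
    using Sup_countable_SUP[of "U ` D"] D(2) by auto
  then have "\<forall>i. \<exists>y. y \<in> D \<and> f i = U y" by blast
  then obtain y where y: "\<And>i. y i \<in> D" "\<And>i. f i = U (y i)"
    using choice[of "\<lambda>i y. y \<in> D \<and> f i = U y"] by blast
  have "D = (\<Union>i. {z \<in> space M. U z \<le> U (y i)})"
  proof safe
    fix z assume z: "z \<in> D"
    then have "U z < Sup (U ` D)" using False by (metis SUP_upper order_le_less)
    then obtain i where "U z < U (y i)" using f(3) y(2) by (auto simp: less_SUP_iff)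
    then show "z \<in> (\<Union>i. {z \<in> space M. U z \<le> U (y i)})"
      using D(1) z by (auto intro: less_imp_le)
  qed (use down y(1) in \<open>auto simp: down_closed_def\<close>)
  moreover have "incseq (\<lambda>i. U (y i))" using f(1) by (simp add: y(2)[symmetric])
  ultimately show ?thesis using y(1) that[of y] by blast
qed

lemma down_closed_measurable:
  fixes U :: "'x \<Rightarrow> ereal"
  assumes U: "U \<in> borel_measurable M" and D: "D \<subseteq> space M"
    and down: "down_closed U (space M) D"
  shows "D \<in> sets M"
proof (cases "D = {}")
  case False
  then obtain y :: "nat \<Rightarrow> 'x" where "D = (\<Union>i. {z \<in> space M. U z \<le> U (y i)})"
    using down_closed_eq_UN_lower_sets[OF D False down] by blast
  then show ?thesis using U by auto
qed simp

lemma (in finite_measure) measure_down_closed_le: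
  fixes U :: "'a \<Rightarrow> ereal"
  assumes U: "U \<in> borel_measurable M" and D: "D \<subseteq> space M"
    and down: "down_closed U (space M) D"
    and bound: "\<And>y. y \<in> D \<Longrightarrow> measure M {z \<in> space M. U z \<le> U y} \<le> c" and "0 \<le> c"
  shows "measure M D \<le> c"
proof (cases "D = {}")
  case False
  then obtain y :: "nat \<Rightarrow> 'a" where y: "range y \<subseteq> D" "incseq (\<lambda>i. U (y i))"
    and D_eq: "D = (\<Union>i. {z \<in> space M. U z \<le> U (y i)})"
    using down_closed_eq_UN_lower_sets[OF D False down] by blast
  let ?L = "\<lambda>i. {z \<in> space M. U z \<le> U (y i)}"
  have "incseq ?L" using y(2) unfolding incseq_def by (blast intro: order.trans)
  then have "(\<lambda>i. measure M (?L i)) \<longlonglongrightarrow> measure M D"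
    unfolding D_eq using U by (intro finite_Lim_measure_incseq) auto
  moreover have "\<And>i. measure M (?L i) \<le> c" using bound y(1) by blast
  ultimately show ?thesis by (intro LIMSEQ_le_const2) auto
qed (simp add: \<open>0 \<le> c\<close>)

lemma hfun_mono:
  assumes "\<forall>p \<in> H.
    measure (P p) {y \<in> space (P p). U y \<le> U x} \<le> measure (P p) {y \<in> space (P p). V y \<le> V x'}"
  shows "hfun P H U x t \<le> hfun P H V x' t"
  unfolding hfun_def using assms by (intro SUP_subset_mono) auto

lemma modif_mono:
  assumes "\<forall>p \<in> H.
    measure (P p) {y \<in> space (P p). U y \<le> U x} \<le> measure (P p) {y \<in> space (P p). V y \<le> V x'}"
  shows "modif P H A B \<alpha> U x \<subseteq> modif P H A B \<alpha> V x'"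
  unfolding modif_def interval_hull_def
  using hfun_mono[OF assms] by (intro closure_mono hull_mono) (auto intro: less_le_trans)

lemma modU_mono:
  assumes "\<forall>p \<in> H.
    measure (P p) {y \<in> space (P p). U y \<le> U x} \<le> measure (P p) {y \<in> space (P p). V y \<le> V x'}"
  shows "modU P H A B \<alpha> U x \<le> modU P H A B \<alpha> V x'"
  unfolding modU_def upper_end_def by (intro Sup_subset_mono image_mono modif_mono[OF assms])

lemma measure_le_hfun:
  assumes "p \<in> H"
  shows "ereal (measure (P p) {y \<in> space (P p). U y \<le> U x}) \<le> hfun P H U x (fst p)"
  unfolding hfun_def using assms by (intro SUP_upper) auto

lemma mem_modif:
  assumes "A \<le> ereal t" "ereal t \<le> B" "hfun P H U x t > ereal \<alpha>"
  shows "t \<in> modif P H A B \<alpha> U x"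
  using assms closure_subset hull_subset unfolding modif_def interval_hull_def by fast

lemma upper_end_interval_hull_le:
  assumes "\<And>t. t \<in> T \<Longrightarrow> ereal t \<le> u"
  shows "upper_end (interval_hull T) \<le> u"
proof -
  have "{t. ereal t \<le> u} = UNIV \<or> {t. ereal t \<le> u} = {} \<or> (\<exists>r. {t. ereal t \<le> u} = {..r})"
    by (cases u) auto
  then have "closed {t. ereal t \<le> u}" "convex {t. ereal t \<le> u}"
    by (auto simp: convex_real_interval)
  then have "interval_hull T \<subseteq> {t. ereal t \<le> u}"
    unfolding interval_hull_def using assms by (intro closure_minimal hull_minimal) auto
  then show ?thesis unfolding upper_end_def by (auto intro: Sup_least)
qed

locale parametric_model =
  fixes P :: "real \<times> 'e \<Rightarrow> 'x measure" and H :: "(real \<times> 'e) set" and S :: "'x measure"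
  assumes prob_space_P: "p \<in> H \<Longrightarrow> prob_space (P p)"
    and sets_P: "p \<in> H \<Longrightarrow> sets (P p) = sets S"
begin

lemma space_P: "p \<in> H \<Longrightarrow> space (P p) = space S"
  using sets_P sets_eq_imp_space_eq by blast

lemma measurable_P: "U \<in> borel_measurable S \<Longrightarrow> p \<in> H \<Longrightarrow> U \<in> borel_measurable (P p)"
  using sets_P measurable_cong_sets by blast

lemma measure_lower_set_le:
  fixes U :: "'x \<Rightarrow> ereal" and V :: "'x \<Rightarrow> 'b::order"
  assumes U: "U \<in> borel_measurable S" and V: "\<And>y z. U z \<le> U y \<Longrightarrow> V z \<le> V y"
    and p: "p \<in> H" and W: "\<And>z. z \<in> space S \<Longrightarrow> W z \<le> W y \<Longrightarrow> V z \<le> V x"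
  shows "measure (P p) {z \<in> space (P p). W z \<le> W y} \<le> measure (P p) {z \<in> space (P p). V z \<le> V x}"
proof -
  interpret prob_space "P p" using prob_space_P[OF p] .
  have "{z \<in> space (P p). V z \<le> V x} \<in> sets (P p)"
    using V by (intro down_closed_measurable[OF measurable_P[OF U p]])
      (auto simp: down_closed_def intro: order.trans)
  then show ?thesis using W space_P[OF p] by (intro finite_measure_mono) auto
qed

lemma modif_subset_modif_of_le:
  assumes U: "U \<in> borel_measurable S" and "U z \<le> U y"
  shows "modif P H A B \<alpha> U z \<subseteq> modif P H A B \<alpha> U y"
proof (intro modif_mono ballI)
  fix p assume "p \<in> H"
  show "measure (P p) {z' \<in> space (P p). U z' \<le> U z} \<le> measure (P p) {z' \<in> space (P p). U z' \<le> U y}"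
    by (rule measure_lower_set_le[OF U _ \<open>p \<in> H\<close>]) (blast intro: order_trans[OF _ assms(2)])+
qed

lemma funpow_modU_mono:
  assumes U: "U \<in> borel_measurable S"
  shows "U y \<le> U x \<Longrightarrow> (modU P H A B \<alpha> ^^ k) U y \<le> (modU P H A B \<alpha> ^^ k) U x"
proof (induction k arbitrary: x y)
  case (Suc k)
  let ?V = "(modU P H A B \<alpha> ^^ k) U"
  have Vyx: "?V y \<le> ?V x" using Suc by blast
  have "measure (P p) {z \<in> space (P p). ?V z \<le> ?V y} \<le> measure (P p) {z \<in> space (P p). ?V z \<le> ?V x}"
    if "p \<in> H" for p
  proof (rule measure_lower_set_le[OF U _ that])
    show "?V z' \<le> ?V y'" if "U z' \<le> U y'" for y' z' using that by (rule Suc.IH)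
    show "?V z \<le> ?V x" if "?V z \<le> ?V y" for z using that Vyx by (rule order_trans)
  qed
  then show ?case by (simp add: modU_mono)
qed simp

lemma modif_subset_modif_funpow:
  assumes U: "U \<in> borel_measurable S"
  shows "modif P H A B \<alpha> U x \<subseteq> modif P H A B \<alpha> ((modU P H A B \<alpha> ^^ k) U) x"
proof (intro modif_mono ballI)
  fix p assume "p \<in> H"
  let ?V = "(modU P H A B \<alpha> ^^ k) U"
  show "measure (P p) {z \<in> space (P p). U z \<le> U x} \<le> measure (P p) {z \<in> space (P p). ?V z \<le> ?V x}"
    by (rule measure_lower_set_le[OF U _ \<open>p \<in> H\<close>]) (erule funpow_modU_mono[OF U])+
qed

lemma modif_inf_eq_modif:
  assumes "U \<in> borel_measurable S"
  shows "modif_inf P H A B \<alpha> U x = modif P H A B \<alpha> U x"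
proof -
  let ?C = "\<lambda>k. modif P H A B \<alpha> ((modU P H A B \<alpha> ^^ k) U) x"
  have "(\<Inter>k. ?C k) \<subseteq> modif P H A B \<alpha> U x"
    using INT_lower[OF UNIV_I, of ?C 0] by simp
  moreover have "modif P H A B \<alpha> U x \<subseteq> (\<Inter>k. ?C k)"
    by (rule INT_greatest) (rule modif_subset_modif_funpow[OF assms])
  ultimately show ?thesis unfolding modif_inf_def by (rule antisym)
qed

lemma exact_ci_modif:
  assumes "0 \<le> \<alpha>" and \<theta>_range: "\<And>p. p \<in> H \<Longrightarrow> A \<le> ereal (fst p) \<and> ereal (fst p) \<le> B"
    and U: "U \<in> borel_measurable S"
  shows "exact_ci P H \<alpha> (modif P H A B \<alpha> U)"
  unfolding exact_ci_def
proof (rule INF_greatest)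
  fix p assume p: "p \<in> H"
  interpret prob_space "P p" using prob_space_P[OF p] .
  define N where "N = {y \<in> space (P p). fst p \<notin> modif P H A B \<alpha> U y}"
  have down: "down_closed U (space (P p)) N"
    using modif_subset_modif_of_le[OF U] unfolding down_closed_def N_def by blast
  have N: "N \<in> sets (P p)"
    by (rule down_closed_measurable[OF measurable_P[OF U p] _ down]) (auto simp: N_def)
  have "measure (P p) N \<le> \<alpha>"
  proof (rule measure_down_closed_le[OF measurable_P[OF U p] _ down _ \<open>0 \<le> \<alpha>\<close>])
    fix y assume "y \<in> N"
    then have "\<not> hfun P H U y (fst p) > ereal \<alpha>"
      using mem_modif[of A "fst p" B \<alpha> P H U y] \<theta>_range[OF p] unfolding N_def by auto
    then have "hfun P H U y (fst p) \<le> ereal \<alpha>" by (simp add: not_less)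
    then have "ereal (measure (P p) {z \<in> space (P p). U z \<le> U y}) \<le> ereal \<alpha>"
      by (rule order_trans[OF measure_le_hfun[OF p]])
    then show "measure (P p) {z \<in> space (P p). U z \<le> U y} \<le> \<alpha>" by simp
  qed (auto simp: N_def)
  moreover have "{y \<in> space (P p). fst p \<in> modif P H A B \<alpha> U y} = space (P p) - N"
    unfolding N_def by auto
  ultimately show "ereal (1 - \<alpha>) \<le> ereal (measure (P p) {y \<in> space (P p). fst p \<in> modif P H A B \<alpha> U y})"
    using prob_compl[OF N] by simp
qed

lemma le_upper_end_of_hfun_gt:
  assumes Uu: "Uu \<in> borel_measurable S" and C: "class_Cu P H S A \<alpha> Uu U" and x: "x \<in> space S"
    and h: "hfun P H Uu x t > ereal \<alpha>"
  shows "ereal t \<le> U x"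
proof (rule ccontr)
  assume "\<not> ereal t \<le> U x"
  obtain p where p: "p \<in> H" "t \<le> fst p"
    and gt: "\<alpha> < measure (P p) {y \<in> space (P p). Uu y \<le> Uu x}"
    using h unfolding hfun_def by (auto simp: less_SUP_iff)
  interpret prob_space "P p" using prob_space_P[OF p(1)] .
  define L where "L = {y \<in> space (P p). Uu y \<le> Uu x}"
  have L: "L \<in> sets (P p)" using measurable_P[OF Uu p(1)] by (simp add: L_def)
  have "{y \<in> space (P p). fst p \<in> up_interval A (U y)} \<subseteq> space (P p) - L"
  proof safe
    fix y assume y: "y \<in> space (P p)" "fst p \<in> up_interval A (U y)" "y \<in> L"
    then have "U y \<le> U x" using C x space_P[OF p(1)] unfolding class_Cu_def L_def by blast
    moreover have "ereal t \<le> ereal (fst p)" "ereal (fst p) \<le> U y"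
      using p(2) y(2) by (auto simp: up_interval_def)
    ultimately show False using \<open>\<not> ereal t \<le> U x\<close> by (meson order_trans)
  qed
  then have "measure (P p) {y \<in> space (P p). fst p \<in> up_interval A (U y)}
      \<le> measure (P p) (space (P p) - L)"
    using L by (intro finite_measure_mono) auto
  also have "\<dots> = 1 - measure (P p) L" using prob_compl[OF L] .
  also have "\<dots> < 1 - \<alpha>" using gt by (simp add: L_def)
  finally have "ereal (measure (P p) {y \<in> space (P p). fst p \<in> up_interval A (U y)}) < ereal (1 - \<alpha>)"
    by simp
  moreover have "ereal (1 - \<alpha>) \<le> ereal (measure (P p) {y \<in> space (P p). fst p \<in> up_interval A (U y)})"
    using C p(1) unfolding class_Cu_def exact_ci_def by (meson INF_lower order_trans)
  ultimately show False by simp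
qed

lemma modU_le_class_Cu:
  assumes "Uu \<in> borel_measurable S" and "class_Cu P H S A \<alpha> Uu U" and "x \<in> space S"
  shows "modU P H A B \<alpha> Uu x \<le> U x"
  unfolding modU_def modif_def
  by (rule upper_end_interval_hull_le) (simp add: le_upper_end_of_hfun_gt[OF assms])

end

theorem theorem5:
  fixes P :: "real \<times> 'e \<Rightarrow> 'x measure" and H :: "(real \<times> 'e) set"
    and S :: "'x measure" and A B :: ereal and \<alpha> :: real and Uu :: "'x \<Rightarrow> ereal"
  assumes "0 \<le> \<alpha>" and "\<alpha> \<le> 1"
    and "\<forall>p \<in> H. prob_space (P p) \<and> sets (P p) = sets S"
    and "\<forall>p \<in> H. A \<le> ereal (fst p) \<and> ereal (fst p) \<le> B"
    and "Uu \<in> borel_measurable S"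
  shows "exact_ci P H \<alpha> (modif P H A B \<alpha> Uu)
    \<and> (\<forall>x \<in> space S. modif_inf P H A B \<alpha> Uu x = modif P H A B \<alpha> Uu x)
    \<and> (\<forall>U. class_Cu P H S A \<alpha> Uu U \<longrightarrow> (\<forall>x \<in> space S. modU P H A B \<alpha> Uu x \<le> U x))"
proof -
  interpret parametric_model P H S
    using assms(3) by (simp add: parametric_model_def)
  have "exact_ci P H \<alpha> (modif P H A B \<alpha> Uu)"
    using assms(4) by (intro exact_ci_modif[OF assms(1) _ assms(5)]) blast
  moreover have "\<forall>x \<in> space S. modif_inf P H A B \<alpha> Uu x = modif P H A B \<alpha> Uu x"
    using modif_inf_eq_modif[OF assms(5)] by blast
  moreover have "\<forall>U. class_Cu P H S A \<alpha> Uu U \<longrightarrow> (\<forall>x \<in> space S. modU P H A B \<alpha> Uu x \<le> U x)"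
    using modU_le_class_Cu[OF assms(5)] by blast
  ultimately show ?thesis by blast
qed

end
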